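(* Let $0<r'<r<1$. The map of condensed abelian groups $\theta_{r'}:\mathbb{Z}((T))_r\to\underline{\mathbb{R}}$, given on $S$-valued points by $\sum a_nT^n\mapsto\big(s\mapsto\sum a_n(s)(r')^n\big)$, is surjective (at every extremally disconnected $S$), and for every extremally disconnected $S$ its kernel on $S$-valued points is a principal ideal of the ring $\mathbb{Z}((T))_r(S)$ generated by a non-zero divisor.
   Context: Extremally disconnected sets are the projective objects in the category of compact Hausdorff spaces. For $0<r<1$, $c>0$ and extremally disconnected $S$, let $\mathbb{Z}((T))_{r,\le c}(S)$ be the set of formal sums $\sum_{n\ge k}a_nT^n$ (for some $k\in\mathbb{Z}$) with $a_n\in C(S,\mathbb{Z})$ such that $\sum_n|a_n(s)|r^n\le c$ for all $s\in S$; set $\mathbb{Z}((T))_r(S)=\bigcup_{c>0}\mathbb{Z}((T))_{r,\le c}(S)$, a ring under addition and multiplication of Laurent series, and this defines a condensed ring $\mathbb{Z}((T))_r$. $\underline{\mathbb{R}}$ is the condensed ring $S\mapsto C(S,\mathbb{R})$. *)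

theory Defs
  imports "HOL-Analysis.Analysis"
begin

definition extremally_disconnected :: "'a topology \<Rightarrow> bool" where
  "extremally_disconnected X \<longleftrightarrow>
     compact_space X \<and> Hausdorff_space X \<and>
     (\<forall>U. openin X U \<longrightarrow> openin X (X closure_of U))"

text \<open>Elements of Z((T))_r(S): a Laurent series sum a_n T^n is represented by its coefficient
  family a :: int => 'a => int; each a_n is a continuous (locally constant) integer function on S,
  set to 0 outside the underlying set of S; coefficients vanish below some index k; and there is c
  with sum_n |a_n(s)| r^n <= c for all s.\<close>
definition ZT :: "'a topology \<Rightarrow> real \<Rightarrow> (int \<Rightarrow> 'a \<Rightarrow> int) set" where
  "ZT X r = {a.
     (\<forall>n. continuous_map X (discrete_topology UNIV) (a n)) \<and>
     (\<forall>n s. s \<notin> topspace X \<longrightarrow> a n s = 0) \<and>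
     (\<exists>k. \<forall>n<k. \<forall>s. a n s = 0) \<and>
     (\<exists>c. \<forall>s\<in>topspace X.
        (\<lambda>n. real_of_int \<bar>a n s\<bar> * r powi n) summable_on UNIV \<and>
        (\<Sum>\<^sub>\<infinity>n. real_of_int \<bar>a n s\<bar> * r powi n) \<le> c)}"

text \<open>Multiplication of Laurent series (Cauchy product, pointwise in s; the sum is finite
  for series bounded below).\<close>
definition ls_mult :: "(int \<Rightarrow> 'a \<Rightarrow> int) \<Rightarrow> (int \<Rightarrow> 'a \<Rightarrow> int) \<Rightarrow> (int \<Rightarrow> 'a \<Rightarrow> int)" where
  "ls_mult a b = (\<lambda>n s. \<Sum>i\<in>{i. a i s \<noteq> 0 \<and> b (n - i) s \<noteq> 0}. a i s * b (n - i) s)"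

definition theta :: "real \<Rightarrow> (int \<Rightarrow> 'a \<Rightarrow> int) \<Rightarrow> 'a \<Rightarrow> real" where
  "theta r' a = (\<lambda>s. \<Sum>\<^sub>\<infinity>n. real_of_int (a n s) * r' powi n)"

end

theory Submission
  imports Defs
begin

unbundle no vec_syntax
unbundle fps_syntax

text \<open>
  Surjectivity: on an extremally disconnected space the closure of each open set {f > m} is
  clopen, so a continuous f can be rounded down to a locally constant integer function h with
  h \<le> f \<le> h + 1. Rounding the rescaled remainders again and again expands f in base r' with
  locally constant, uniformly bounded digits, and such an expansion lies in Z((T))_r because r < 1.

  Kernel: the coefficients of a power series Q can be chosen in [0, 1), one after the other, such
  that G = (1 - T / r') exp Q has integer coefficients. Since Q has bounded coefficients, exp Q
  and exp (- Q) converge on the open unit disc, and since G has constant term 1, its inverse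
  exp (- Q) / (1 - T / r') again has integer coefficients. So G is not a zero divisor and
  vanishes at r', and every a in the kernel is G times a / G, where a / G lies in Z((T))_r
  because division by 1 - T / r' is bounded for the r-norm on series vanishing at r'.
\<close>

section \<open>Locally constant functions on extremally disconnected spaces\<close>

lemma continuous_map_discrete_binop:
  assumes "continuous_map X (discrete_topology UNIV) h" "continuous_map X (discrete_topology UNIV) k"
  shows "continuous_map X (discrete_topology UNIV) (\<lambda>s. f (h s) (k s))"
proof -
  have "continuous_map X (prod_topology (discrete_topology UNIV) (discrete_topology UNIV)) (\<lambda>s. (h s, k s))"
    using assms by (simp add: continuous_map_paired)
  then have "continuous_map X (discrete_topology UNIV) (\<lambda>s. (h s, k s))"
    by (simp flip: prod_topology_discrete_topology)
  then show ?thesis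
    using continuous_map_compose[of X _ "\<lambda>s. (h s, k s)" _ "case_prod f"] by (simp add: o_def)
qed

lemma continuous_map_discrete_sum:
  assumes "finite I" "\<And>i. i \<in> I \<Longrightarrow> continuous_map X (discrete_topology UNIV) (h i)"
  shows "continuous_map X (discrete_topology UNIV) (\<lambda>s. \<Sum>i\<in>I. h i s :: 'b::comm_monoid_add)"
  using assms by (induction I rule: finite_induct) (auto intro: continuous_map_discrete_binop)

lemma continuous_map_discrete_of_int:
  assumes "continuous_map X (discrete_topology UNIV) h"
  shows "continuous_map X euclideanreal (\<lambda>s. real_of_int (h s))"
  using continuous_map_compose[OF assms, of euclideanreal real_of_int] by (simp add: o_def)

lemma continuous_map_discrete_if_clopen_determined:
  assumes "finite I" "\<And>i. i \<in> I \<Longrightarrow> openin X (C i) \<and> closedin X (C i)"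
    and "\<And>s t. s \<in> topspace X \<Longrightarrow> t \<in> topspace X \<Longrightarrow> (\<forall>i\<in>I. s \<in> C i \<longleftrightarrow> t \<in> C i) \<Longrightarrow> h s = h t"
  shows "continuous_map X (discrete_topology UNIV) h"
  unfolding continuous_map
proof (intro conjI allI impI)
  fix U
  show "openin X {s \<in> topspace X. h s \<in> U}"
  proof (subst openin_subopen, intro ballI)
    fix s assume s: "s \<in> {s \<in> topspace X. h s \<in> U}"
    define V where "V = (\<Inter>i\<in>I. if s \<in> C i then C i else topspace X - C i) \<inter> topspace X"
    have "openin X V"
      unfolding V_def using assms(1,2) by (intro openin_INT) auto
    moreover have "s \<in> V \<and> V \<subseteq> {s \<in> topspace X. h s \<in> U}"
    proof
      show "s \<in> V" using s by (auto simp: V_def)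
      show "V \<subseteq> {s \<in> topspace X. h s \<in> U}"
      proof
        fix t assume t: "t \<in> V"
        then have tX: "t \<in> topspace X" by (simp add: V_def)
        have "s \<in> C i \<longleftrightarrow> t \<in> C i" if "i \<in> I" for i
          using t that by (cases "s \<in> C i") (auto simp: V_def)
        then have "h t = h s" using assms(3)[of s t] s tX by simp
        then show "t \<in> {s \<in> topspace X. h s \<in> U}" using s tX by simp
      qed
    qed
    ultimately show "\<exists>V. openin X V \<and> s \<in> V \<and> V \<subseteq> {s \<in> topspace X. h s \<in> U}" by blast
  qed
qed auto

lemma compact_space_bounded_real:
  assumes "compact_space X" "continuous_map X euclideanreal f"
  obtains B where "\<And>s. s \<in> topspace X \<Longrightarrow> \<bar>f s\<bar> \<le> B"
proof -
  have "compactin euclideanreal (f ` topspace X)"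
    using assms image_compactin unfolding compact_space_def by blast
  then have "bounded (f ` topspace X)" by (simp add: compact_imp_bounded)
  then show ?thesis using that unfolding bounded_real by blast
qed

lemma extremally_disconnected_clopen_superlevel:
  assumes ed: "extremally_disconnected X" and f: "continuous_map X euclideanreal f"
  shows "openin X (X closure_of {s \<in> topspace X. c < f s})"
    and "closedin X (X closure_of {s \<in> topspace X. c < f s})"
    and "s \<in> X closure_of {s \<in> topspace X. c < f s} \<Longrightarrow> c \<le> f s"
    and "s \<in> topspace X \<Longrightarrow> c < f s \<Longrightarrow> s \<in> X closure_of {s \<in> topspace X. c < f s}"
proof -
  have "openin X {s \<in> topspace X. f s \<in> {c<..}}"
    by (intro openin_continuous_map_preimage[OF f]) auto
  then show "openin X (X closure_of {s \<in> topspace X. c < f s})"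
    using ed unfolding extremally_disconnected_def by simp
  show "closedin X (X closure_of {s \<in> topspace X. c < f s})" by simp
  have "closedin X {s \<in> topspace X. f s \<in> {c..}}"
    by (intro closedin_continuous_map_preimage[OF f]) auto
  then have "X closure_of {s \<in> topspace X. c < f s} \<subseteq> {s \<in> topspace X. f s \<in> {c..}}"
    by (intro closure_of_minimal) auto
  then show "s \<in> X closure_of {s \<in> topspace X. c < f s} \<Longrightarrow> c \<le> f s" by auto
  show "s \<in> topspace X \<Longrightarrow> c < f s \<Longrightarrow> s \<in> X closure_of {s \<in> topspace X. c < f s}"
    using closure_of_subset[of "{s \<in> topspace X. c < f s}" X] by auto
qed

text \<open>h s is the largest integer m in a range containing f(X) such that s lies in the clopen set
  C m, which is sandwiched between {f > m} and {f \<ge> m}.\<close>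
lemma extremally_disconnected_floor_approx:
  assumes ed: "extremally_disconnected X" and f: "continuous_map X euclideanreal f"
  obtains h :: "'a \<Rightarrow> int" where "continuous_map X (discrete_topology UNIV) h"
    "\<And>s. s \<in> topspace X \<Longrightarrow> real_of_int (h s) \<le> f s \<and> f s \<le> real_of_int (h s) + 1"
proof -
  obtain B where B: "\<And>s. s \<in> topspace X \<Longrightarrow> \<bar>f s\<bar> \<le> B"
    using compact_space_bounded_real ed f unfolding extremally_disconnected_def by blast
  obtain N :: nat where "B \<le> real N" using real_arch_simple by blast
  with B have N: "\<bar>f s\<bar> \<le> real N" if "s \<in> topspace X" for s
    using that by fastforce
  define C where "C m = X closure_of {s \<in> topspace X. real_of_int m < f s}" for m :: int
  have clopen: "openin X (C m) \<and> closedin X (C m)" for m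
    using extremally_disconnected_clopen_superlevel(1,2)[OF ed f] by (simp add: C_def)
  have C_ge: "real_of_int m \<le> f s" if "s \<in> C m" for m s
    using extremally_disconnected_clopen_superlevel(3)[OF ed f] that by (simp add: C_def)
  have C_gt: "s \<in> C m" if "s \<in> topspace X" "f s > real_of_int m" for m s
    using extremally_disconnected_clopen_superlevel(4)[OF ed f] that by (simp add: C_def)
  define I where "I = {- int N - 1 .. int N}"
  define h where "h s = Max {m \<in> I. s \<in> C m}" for s
  have fin: "finite {m \<in> I. s \<in> C m}" for s
    by (rule finite_subset[of _ I]) (auto simp: I_def)
  have h_mem: "h s \<in> {m \<in> I. s \<in> C m}" if "s \<in> topspace X" for s
  proof -
    have "- int N - 1 \<in> {m \<in> I. s \<in> C m}"
      using N[OF that] C_gt[OF that] by (auto simp: I_def)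
    then show ?thesis unfolding h_def using fin by (intro Max_in) auto
  qed
  show ?thesis
  proof
    show "continuous_map X (discrete_topology UNIV) h"
    proof (rule continuous_map_discrete_if_clopen_determined[where I = I and C = C])
      fix s t assume "\<forall>i\<in>I. s \<in> C i \<longleftrightarrow> t \<in> C i"
      then have "{m \<in> I. s \<in> C m} = {m \<in> I. t \<in> C m}" by blast
      then show "h s = h t" by (simp add: h_def)
    qed (auto simp: I_def clopen)
    fix s assume s: "s \<in> topspace X"
    show "real_of_int (h s) \<le> f s \<and> f s \<le> real_of_int (h s) + 1"
    proof
      show "real_of_int (h s) \<le> f s" using h_mem[OF s] C_ge by auto
      have "h s + 1 \<notin> {m \<in> I. s \<in> C m}"
      proof
        assume "h s + 1 \<in> {m \<in> I. s \<in> C m}"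
        then have "h s + 1 \<le> h s" unfolding h_def using fin by (intro Max_ge) auto
        then show False by simp
      qed
      moreover have "h s + 1 \<in> I \<or> h s = int N" using h_mem[OF s] by (auto simp: I_def)
      ultimately show "f s \<le> real_of_int (h s) + 1" using C_gt[OF s] N[OF s] by force
    qed
  qed
qed

lemma greedy_expansion:
  fixes R :: "nat \<Rightarrow> real" and d :: "nat \<Rightarrow> int"
  assumes \<rho>: "0 < \<rho>" "\<rho> < 1"
    and digit: "\<And>n. real_of_int (d n) \<le> R n \<and> R n \<le> real_of_int (d n) + 1"
    and remainder: "\<And>n. R (Suc n) = (R n - real_of_int (d n)) / \<rho>"
  shows "(\<lambda>n. real_of_int (d n) * \<rho>^n) sums R 0"
    and "\<bar>real_of_int (d n)\<bar> \<le> \<bar>R 0\<bar> + 1 / \<rho> + 1"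
proof -
  have R_Suc: "0 \<le> R (Suc n) \<and> R (Suc n) \<le> 1 / \<rho>" for n
    using digit[of n] \<rho> by (auto simp: remainder divide_right_mono)
  have R_bound: "\<bar>R n\<bar> \<le> \<bar>R 0\<bar> + 1 / \<rho>" for n
  proof (cases n)
    case (Suc m)
    then have "\<bar>R n\<bar> = R (Suc m)" using R_Suc[of m] by simp
    then show ?thesis using R_Suc[of m] abs_ge_zero[of "R 0"] by linarith
  qed (use \<rho> in simp)
  have partial: "(\<Sum>k<n. real_of_int (d k) * \<rho>^k) = R 0 - \<rho>^n * R n" for n
  proof (induction n)
    case (Suc n)
    have "\<rho>^Suc n * R (Suc n) = \<rho>^n * (R n - real_of_int (d n))" using \<rho> by (simp add: remainder)
    then show ?case using Suc.IH by (simp add: algebra_simps)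
  qed simp
  have "(\<lambda>n. \<rho>^n * R n) \<longlonglongrightarrow> 0"
  proof (rule Lim_null_comparison)
    show "\<forall>\<^sub>F n in sequentially. norm (\<rho>^n * R n) \<le> \<rho>^n * (\<bar>R 0\<bar> + 1 / \<rho>)"
      using R_bound \<rho> by (auto simp: abs_mult intro: mult_left_mono)
    show "(\<lambda>n. \<rho>^n * (\<bar>R 0\<bar> + 1 / \<rho>)) \<longlonglongrightarrow> 0"
      using \<rho> by (intro tendsto_mult_left_zero LIMSEQ_power_zero) auto
  qed
  then have "(\<lambda>n. R 0 - \<rho>^n * R n) \<longlonglongrightarrow> R 0 - 0" by (intro tendsto_diff tendsto_const)
  then show "(\<lambda>n. real_of_int (d n) * \<rho>^n) sums R 0" by (simp add: sums_def partial)
  show "\<bar>real_of_int (d n)\<bar> \<le> \<bar>R 0\<bar> + 1 / \<rho> + 1"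
    using digit[of n] R_bound[of n] by linarith
qed

lemma extremally_disconnected_digit_expansion:
  assumes ed: "extremally_disconnected X" and f: "continuous_map X euclideanreal f"
    and \<rho>: "0 < \<rho>" "\<rho> < 1"
  obtains d :: "nat \<Rightarrow> 'a \<Rightarrow> int" and D :: real
  where "\<And>n. continuous_map X (discrete_topology UNIV) (d n)"
    and "\<And>n s. s \<in> topspace X \<Longrightarrow> \<bar>real_of_int (d n s)\<bar> \<le> D"
    and "\<And>s. s \<in> topspace X \<Longrightarrow> (\<lambda>n. real_of_int (d n s) * \<rho>^n) sums f s"
proof -
  have "\<forall>g. \<exists>h. continuous_map X euclideanreal g \<longrightarrow> continuous_map X (discrete_topology UNIV) h \<and>
          (\<forall>s\<in>topspace X. real_of_int (h s) \<le> g s \<and> g s \<le> real_of_int (h s) + 1)"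
    using extremally_disconnected_floor_approx[OF ed] by metis
  then obtain H where H: "\<And>g. continuous_map X euclideanreal g \<Longrightarrow>
      continuous_map X (discrete_topology UNIV) (H g) \<and>
      (\<forall>s\<in>topspace X. real_of_int (H g s) \<le> g s \<and> g s \<le> real_of_int (H g s) + 1)"
    by metis
  define R where "R = rec_nat f (\<lambda>_ g s. (g s - real_of_int (H g s)) / \<rho>)"
  have R_0: "R 0 = f" and R_Suc: "R (Suc n) = (\<lambda>s. (R n s - real_of_int (H (R n) s)) / \<rho>)" for n
    by (simp_all add: R_def)
  have R_cont: "continuous_map X euclideanreal (R n)" for n
  proof (induction n)
    case (Suc n)
    then have "continuous_map X euclideanreal (\<lambda>s. real_of_int (H (R n) s))"
      using H continuous_map_discrete_of_int by blast
    then show ?case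
      unfolding R_Suc using Suc \<rho> by (intro continuous_map_real_divide continuous_map_diff) auto
  qed (simp add: R_0 f)
  obtain B where B: "\<And>s. s \<in> topspace X \<Longrightarrow> \<bar>f s\<bar> \<le> B"
    using compact_space_bounded_real ed f unfolding extremally_disconnected_def by blast
  show ?thesis
  proof
    show "continuous_map X (discrete_topology UNIV) (H (R n))" for n using H R_cont by blast
    fix s assume s: "s \<in> topspace X"
    have "real_of_int (H (R n) s) \<le> R n s \<and> R n s \<le> real_of_int (H (R n) s) + 1" for n
      using H[OF R_cont] s by blast
    note expansion = greedy_expansion[of \<rho> "\<lambda>n. H (R n) s" "\<lambda>n. R n s", OF \<rho> this R_Suc[THEN fun_cong]]
    show "(\<lambda>n. real_of_int (H (R n) s) * \<rho>^n) sums f s" using expansion(1) by (simp add: R_0)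
    show "\<bar>real_of_int (H (R n) s)\<bar> \<le> B + 1 / \<rho> + 1" for n
      using expansion(2)[of n] B[OF s] by (simp add: R_0)
  qed
qed

section \<open>Weighted norms of power series\<close>

definition fps_norm_summable :: "real \<Rightarrow> real fps \<Rightarrow> bool" where
  "fps_norm_summable \<rho> F \<longleftrightarrow> summable (\<lambda>n. \<bar>F $ n\<bar> * \<rho>^n)"

definition fps_norm :: "real \<Rightarrow> real fps \<Rightarrow> real" where
  "fps_norm \<rho> F = (\<Sum>n. \<bar>F $ n\<bar> * \<rho>^n)"

lemma fps_norm_nonneg: "0 \<le> \<rho> \<Longrightarrow> fps_norm_summable \<rho> F \<Longrightarrow> 0 \<le> fps_norm \<rho> F"
  unfolding fps_norm_def fps_norm_summable_def by (rule suminf_nonneg) auto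

lemma fps_norm_summable_mono:
  assumes "fps_norm_summable \<rho> F" "0 \<le> \<sigma>" "\<sigma> \<le> \<rho>"
  shows "fps_norm_summable \<sigma> F"
  unfolding fps_norm_summable_def
proof (rule summable_comparison_test'[OF assms(1)[unfolded fps_norm_summable_def], of 0])
  fix n :: nat
  have "\<sigma>^n \<le> \<rho>^n" using assms by (intro power_mono) auto
  then show "norm (\<bar>F $ n\<bar> * \<sigma>^n) \<le> \<bar>F $ n\<bar> * \<rho>^n"
    using assms by (simp add: abs_mult mult_left_mono)
qed

lemma convolution_times_power:
  fixes \<rho> :: "'a::comm_semiring_1"
  shows "(\<Sum>i\<le>k. (c i * \<rho>^i) * (d (k - i) * \<rho>^(k - i))) = (\<Sum>i\<le>k. c i * d (k - i)) * \<rho>^k"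
  by (simp add: sum_distrib_left sum_distrib_right mult_ac flip: power_add)

lemma fps_norm_mult:
  fixes F G :: "real fps"
  assumes \<rho>: "0 \<le> \<rho>" and F: "fps_norm_summable \<rho> F" and G: "fps_norm_summable \<rho> G"
  shows "fps_norm_summable \<rho> (F * G)" and "fps_norm \<rho> (F * G) \<le> fps_norm \<rho> F * fps_norm \<rho> G"
proof -
  have nF: "summable (\<lambda>n. norm (\<bar>F $ n\<bar> * \<rho>^n))" using F \<rho> by (simp add: fps_norm_summable_def abs_mult)
  have nG: "summable (\<lambda>n. norm (\<bar>G $ n\<bar> * \<rho>^n))" using G \<rho> by (simp add: fps_norm_summable_def abs_mult)
  have abs_conv: "\<bar>(F * G) $ k\<bar> * \<rho>^k \<le> (\<Sum>i\<le>k. \<bar>F $ i\<bar> * \<bar>G $ (k - i)\<bar>) * \<rho>^k" for k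
  proof -
    have "\<bar>(F * G) $ k\<bar> \<le> (\<Sum>i\<le>k. \<bar>F $ i\<bar> * \<bar>G $ (k - i)\<bar>)"
      unfolding fps_mult_nth atLeast0AtMost by (rule order_trans[OF sum_abs]) (simp add: abs_mult)
    then show ?thesis using \<rho> by (simp add: mult_right_mono)
  qed
  have S: "summable (\<lambda>k. (\<Sum>i\<le>k. \<bar>F $ i\<bar> * \<bar>G $ (k - i)\<bar>) * \<rho>^k)"
    using summable_Cauchy_product[OF nF nG]
      convolution_times_power[where c = "\<lambda>i. \<bar>F $ i\<bar>" and d = "\<lambda>i. \<bar>G $ i\<bar>"]
    by simp
  show FG: "fps_norm_summable \<rho> (F * G)"
    unfolding fps_norm_summable_def
    by (rule summable_comparison_test'[OF S, of 0]) (use abs_conv \<rho> in auto)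
  have "fps_norm \<rho> (F * G) \<le> (\<Sum>k. (\<Sum>i\<le>k. \<bar>F $ i\<bar> * \<bar>G $ (k - i)\<bar>) * \<rho>^k)"
    unfolding fps_norm_def by (rule suminf_le[OF abs_conv FG[unfolded fps_norm_summable_def] S])
  also have "\<dots> = fps_norm \<rho> F * fps_norm \<rho> G"
    using Cauchy_product[OF nF nG] convolution_times_power[where c = "\<lambda>i. \<bar>F $ i\<bar>" and d = "\<lambda>i. \<bar>G $ i\<bar>"]
    by (simp add: fps_norm_def)
  finally show "fps_norm \<rho> (F * G) \<le> fps_norm \<rho> F * fps_norm \<rho> G" .
qed

lemma eval_fps_mult_if_fps_norm_summable:
  fixes F G :: "real fps"
  assumes \<rho>: "0 \<le> \<rho>" and F: "fps_norm_summable \<rho> F" and G: "fps_norm_summable \<rho> G"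
  shows "eval_fps (F * G) \<rho> = eval_fps F \<rho> * eval_fps G \<rho>"
proof -
  have nF: "summable (\<lambda>n. norm (F $ n * \<rho>^n))" using F \<rho> by (simp add: fps_norm_summable_def abs_mult)
  have nG: "summable (\<lambda>n. norm (G $ n * \<rho>^n))" using G \<rho> by (simp add: fps_norm_summable_def abs_mult)
  show ?thesis
    using Cauchy_product[OF nF nG] convolution_times_power[where c = "\<lambda>i. F $ i" and d = "\<lambda>i. G $ i"]
    by (simp add: eval_fps_def fps_mult_nth atLeast0AtMost)
qed

lemma fps_norm_bounded_coeffs:
  fixes F :: "real fps"
  assumes "\<And>n. \<bar>F $ n\<bar> \<le> D" "0 \<le> \<rho>" "\<rho> < 1"
  shows "fps_norm_summable \<rho> F" and "fps_norm \<rho> F \<le> D / (1 - \<rho>)"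
proof -
  have geometric: "(\<lambda>n. D * \<rho>^n) sums (D / (1 - \<rho>))"
    using sums_mult[OF geometric_sums[of \<rho>], of D] assms(2,3) by simp
  have le: "\<bar>F $ n\<bar> * \<rho>^n \<le> D * \<rho>^n" for n
    using assms by (simp add: mult_right_mono)
  show S: "fps_norm_summable \<rho> F"
    unfolding fps_norm_summable_def
    by (rule summable_comparison_test'[OF sums_summable[OF geometric], of 0])
       (use le assms in \<open>simp add: abs_mult\<close>)
  show "fps_norm \<rho> F \<le> D / (1 - \<rho>)"
    using suminf_le[OF le S[unfolded fps_norm_summable_def] sums_summable[OF geometric]]
      sums_unique[OF geometric] by (simp add: fps_norm_def)
qed

lemma summable_nat_times_power:
  fixes \<rho> :: real assumes "0 \<le> \<rho>" "\<rho> < 1"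
  shows "summable (\<lambda>k. real k * \<rho>^k)"
proof -
  have "summable (\<lambda>k. diffs (\<lambda>_. 1) k * \<rho>^k)"
    by (rule termdiff_converges[of \<rho> 1]) (use assms in \<open>auto intro: summable_geometric\<close>)
  then have "summable (\<lambda>k. real (Suc k) * \<rho>^k)" by (simp add: diffs_def)
  then show ?thesis
    by (rule summable_comparison_test'[of _ 0]) (use assms in \<open>auto intro!: mult_right_mono\<close>)
qed

lemma recursion_step_bound:
  fixes V e :: "nat \<Rightarrow> real"
  assumes e: "\<And>k. \<bar>e k\<bar> \<le> 1"
    and recursion: "real n * V n = (\<Sum>k=1..n. real k * e k * V (n - k))"
    and n: "n \<ge> 1" "(\<Sum>k=1..n. real k * \<rho>^k) \<le> real n"
    and \<rho>: "0 \<le> \<rho>" and C: "0 \<le> C" and previous: "\<And>j. j < n \<Longrightarrow> \<bar>V j\<bar> * \<rho>^j \<le> C"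
  shows "\<bar>V n\<bar> * \<rho>^n \<le> C"
proof -
  have summand: "\<bar>real k * e k * V (n - k)\<bar> * \<rho>^n \<le> real k * \<rho>^k * C" if "k \<in> {1..n}" for k
  proof -
    have "\<rho>^n = \<rho>^k * \<rho>^(n - k)" using that by (simp flip: power_add)
    then have "\<bar>real k * e k * V (n - k)\<bar> * \<rho>^n = real k * \<rho>^k * (\<bar>e k\<bar> * (\<bar>V (n - k)\<bar> * \<rho>^(n - k)))"
      by (simp add: abs_mult mult_ac)
    also have "\<dots> \<le> real k * \<rho>^k * (1 * C)"
      using \<rho> e[of k] previous[of "n - k"] that C by (intro mult_left_mono mult_mono) auto
    finally show ?thesis by simp
  qed
  have "real n * \<bar>V n\<bar> = \<bar>\<Sum>k=1..n. real k * e k * V (n - k)\<bar>"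
    using arg_cong[OF recursion, of abs] by (simp add: abs_mult)
  then have "real n * (\<bar>V n\<bar> * \<rho>^n) = \<bar>\<Sum>k=1..n. real k * e k * V (n - k)\<bar> * \<rho>^n"
    by (simp flip: mult.assoc)
  also have "\<dots> \<le> (\<Sum>k=1..n. \<bar>real k * e k * V (n - k)\<bar> * \<rho>^n)"
    using \<rho> by (simp add: sum_distrib_right mult_right_mono sum_abs flip: sum_distrib_right)
  also have "\<dots> \<le> (\<Sum>k=1..n. real k * \<rho>^k) * C"
    unfolding sum_distrib_right by (rule sum_mono[OF summand])
  also have "\<dots> \<le> real n * C" using n C by (intro mult_right_mono) auto
  finally show ?thesis using n by simp
qed

text \<open>Since the weights k \<rho>^k are summable, the bound on |V j| \<rho>^j for small j propagates
  through the recursion as soon as n exceeds their sum.\<close>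
lemma recursion_growth_bound:
  fixes V e :: "nat \<Rightarrow> real"
  assumes e: "\<And>k. \<bar>e k\<bar> \<le> 1"
    and recursion: "\<And>m. m \<ge> 1 \<Longrightarrow> real m * V m = (\<Sum>k=1..m. real k * e k * V (m - k))"
    and \<rho>: "0 < \<rho>" "\<rho> < 1"
  obtains C where "\<And>n. \<bar>V n\<bar> * \<rho>^n \<le> C"
proof -
  define S where "S = (\<Sum>k. real k * \<rho>^k)"
  have partial_S: "(\<Sum>k=1..n. real k * \<rho>^k) \<le> S" for n
    unfolding S_def by (rule sum_le_suminf[OF summable_nat_times_power]) (use \<rho> in auto)
  obtain N :: nat where N: "S \<le> real N" using real_arch_simple by blast
  define C where "C = (\<Sum>n\<le>N. \<bar>V n\<bar> * \<rho>^n)"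
  have C: "0 \<le> C" unfolding C_def using \<rho> by (intro sum_nonneg) auto
  have "\<bar>V n\<bar> * \<rho>^n \<le> C" for n
  proof (induction n rule: less_induct)
    case (less n)
    show ?case
    proof (cases "n \<le> N")
      case True
      then show ?thesis unfolding C_def by (intro member_le_sum) (use \<rho> in auto)
    next
      case False
      then have n: "n \<ge> 1" "(\<Sum>k=1..n. real k * \<rho>^k) \<le> real n"
        using N partial_S[of n] by auto
      show ?thesis
        using recursion_step_bound[OF e recursion[OF n(1)] n _ C less] \<rho> by simp
    qed
  qed
  then show ?thesis using that by blast
qed

lemma fps_norm_summable_if_log_deriv_bounded:
  fixes F E :: "real fps"
  assumes deriv: "fps_deriv F = fps_deriv E * F" and E: "\<And>k. \<bar>E $ k\<bar> \<le> 1"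
    and \<rho>: "0 \<le> \<rho>" "\<rho> < 1"
  shows "fps_norm_summable \<rho> F"
proof -
  have recursion: "real m * F $ m = (\<Sum>k=1..m. real k * E $ k * F $ (m - k))" if "m \<ge> 1" for m
  proof -
    obtain n where m: "m = Suc n" using \<open>m \<ge> 1\<close> by (cases m) auto
    have "real (Suc n) * F $ Suc n = (fps_deriv E * F) $ n" by (simp flip: deriv)
    also have "\<dots> = (\<Sum>i=0..n. real (Suc i) * E $ Suc i * F $ (n - i))"
      by (simp add: fps_mult_nth)
    also have "\<dots> = (\<Sum>k=1..Suc n. real k * E $ k * F $ (Suc n - k))"
      using sum.shift_bounds_cl_Suc_ivl[of "\<lambda>k. real k * E $ k * F $ (Suc n - k)" 0 n] by simp
    finally show ?thesis by (simp add: m)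
  qed
  define \<sigma> where "\<sigma> = (1 + \<rho>) / 2"
  have \<sigma>: "0 < \<sigma>" "\<sigma> < 1" "\<rho> < \<sigma>" using \<rho> by (auto simp: \<sigma>_def)
  obtain C where C: "\<And>n. \<bar>F $ n\<bar> * \<sigma>^n \<le> C"
    using recursion_growth_bound[of "\<lambda>k. E $ k" "\<lambda>n. F $ n" \<sigma>] E recursion \<sigma> by blast
  show ?thesis
    unfolding fps_norm_summable_def
  proof (rule summable_comparison_test'[of "\<lambda>n. C * (\<rho> / \<sigma>)^n" 0])
    show "summable (\<lambda>n. C * (\<rho> / \<sigma>)^n)" using \<rho> \<sigma> by (intro summable_mult summable_geometric) auto
    fix n :: nat
    have "\<bar>F $ n\<bar> * \<rho>^n = (\<bar>F $ n\<bar> * \<sigma>^n) * (\<rho> / \<sigma>)^n" using \<sigma> by (simp add: power_divide)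
    also have "\<dots> \<le> C * (\<rho> / \<sigma>)^n" using C[of n] \<rho> \<sigma> by (intro mult_right_mono) auto
    finally show "norm (\<bar>F $ n\<bar> * \<rho>^n) \<le> C * (\<rho> / \<sigma>)^n" using \<rho> by (simp add: abs_mult)
  qed
qed

section \<open>An integral power series with a simple zero at r'\<close>

text \<open>unit_coeffs b n = (q_n, u_n) are the n-th coefficients of power series Q and U = exp Q:
  u is determined by the recursion m u_m = (sum over k = 1..m of k q_k u_(m-k)) coming from
  U' = Q' U, and the free choice of q_(n+1) in [0, 1) makes u_(n+1) - b u_n an integer.\<close>
fun unit_coeffs :: "real \<Rightarrow> nat \<Rightarrow> real \<times> real" where
  "unit_coeffs b 0 = (0, 1)"
| "unit_coeffs b (Suc n) =
    (let P = (\<Sum>k=1..n. real k * fst (unit_coeffs b k) * snd (unit_coeffs b (Suc n - k))) / real (Suc n);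
         q = frac (b * snd (unit_coeffs b n) - P)
     in (q, q + P))"

definition gen_log :: "real \<Rightarrow> real fps" where
  "gen_log b = Abs_fps (\<lambda>n. fst (unit_coeffs b n))"

definition gen_unit :: "real \<Rightarrow> real fps" where
  "gen_unit b = Abs_fps (\<lambda>n. snd (unit_coeffs b n))"

lemma gen_unit_0: "gen_unit b $ 0 = 1"
  by (simp add: gen_unit_def)

lemma gen_log_bound: "\<bar>gen_log b $ n\<bar> \<le> 1"
  by (cases n) (simp_all add: gen_log_def Let_def frac_lt_1 less_imp_le)

lemma gen_unit_Suc:
  "gen_unit b $ Suc n =
     gen_log b $ Suc n + (\<Sum>k=1..n. real k * gen_log b $ k * gen_unit b $ (Suc n - k)) / real (Suc n)"
  by (simp add: gen_unit_def gen_log_def Let_def)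

lemma gen_unit_step_Ints: "gen_unit b $ Suc n - b * gen_unit b $ n \<in> \<int>"
proof -
  have "gen_unit b $ Suc n - b * gen_unit b $ n = - of_int \<lfloor>b * gen_unit b $ n -
      (\<Sum>k=1..n. real k * gen_log b $ k * gen_unit b $ (Suc n - k)) / real (Suc n)\<rfloor>"
    by (simp add: gen_unit_def gen_log_def Let_def frac_def)
  then show ?thesis by simp
qed

lemma fps_deriv_gen_unit: "fps_deriv (gen_unit b) = fps_deriv (gen_log b) * gen_unit b"
proof (rule fps_ext)
  fix n
  have "fps_deriv (gen_unit b) $ n =
      (\<Sum>k=1..n. real k * gen_log b $ k * gen_unit b $ (Suc n - k)) + real (Suc n) * gen_log b $ Suc n"
    by (simp add: gen_unit_Suc field_simps del: of_nat_Suc)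
  also have "\<dots> = (\<Sum>k=1..Suc n. real k * gen_log b $ k * gen_unit b $ (Suc n - k))"
    by (simp add: gen_unit_0)
  also have "\<dots> = (\<Sum>i=0..n. real (Suc i) * gen_log b $ Suc i * gen_unit b $ (n - i))"
    using sum.shift_bounds_cl_Suc_ivl[of "\<lambda>k. real k * gen_log b $ k * gen_unit b $ (Suc n - k)" 0 n]
    by simp
  also have "\<dots> = (fps_deriv (gen_log b) * gen_unit b) $ n"
    by (simp add: fps_mult_nth)
  finally show "fps_deriv (gen_unit b) $ n = (fps_deriv (gen_log b) * gen_unit b) $ n" .
qed

lemma fps_norm_summable_gen_unit: "0 \<le> \<rho> \<Longrightarrow> \<rho> < 1 \<Longrightarrow> fps_norm_summable \<rho> (gen_unit b)"
  by (rule fps_norm_summable_if_log_deriv_bounded[OF fps_deriv_gen_unit gen_log_bound])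

lemma fps_norm_summable_inverse_gen_unit:
  assumes "0 \<le> \<rho>" "\<rho> < 1"
  shows "fps_norm_summable \<rho> (inverse (gen_unit b))"
proof (rule fps_norm_summable_if_log_deriv_bounded[OF _ _ assms])
  have "fps_deriv (inverse (gen_unit b)) = - fps_deriv (gen_unit b) * (inverse (gen_unit b))\<^sup>2"
    by (rule fps_inverse_deriv) (simp add: gen_unit_0)
  also have "\<dots> = - fps_deriv (gen_log b) * inverse (gen_unit b) * (gen_unit b * inverse (gen_unit b))"
    by (simp add: fps_deriv_gen_unit power2_eq_square mult_ac)
  also have "gen_unit b * inverse (gen_unit b) = 1"
    by (rule inverse_mult_eq_1') (simp add: gen_unit_0)
  finally show "fps_deriv (inverse (gen_unit b)) = fps_deriv (- gen_log b) * inverse (gen_unit b)"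
    by simp
  show "\<bar>(- gen_log b) $ k\<bar> \<le> 1" for k using gen_log_bound by simp
qed

definition geometric_fps :: "real \<Rightarrow> real fps" where
  "geometric_fps b = Abs_fps (\<lambda>n. b^n)"

lemma root_factor_mult_geometric_fps: "(1 - fps_const b * fps_X) * geometric_fps b = 1"
proof (rule fps_ext)
  fix n show "((1 - fps_const b * fps_X) * geometric_fps b) $ n = (1 :: real fps) $ n"
    by (cases n) (simp_all add: geometric_fps_def algebra_simps fps_X_mult_nth)
qed

lemma eval_fps_root_factor: "eval_fps (1 - fps_const b * fps_X) z = 1 - b * z"
proof -
  have "eval_fps (1 - fps_const b * fps_X) z = (\<Sum>n\<in>{0,1}. (1 - fps_const b * fps_X) $ n * z^n)"
    unfolding eval_fps_def by (rule suminf_finite) (auto simp: fps_X_mult_nth)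
  then show ?thesis by (simp add: fps_X_mult_nth)
qed

lemma fps_norm_summable_root_factor: "fps_norm_summable \<rho> (1 - fps_const b * fps_X)"
  unfolding fps_norm_summable_def by (rule summable_finite[of "{0,1}"]) (auto simp: fps_X_mult_nth)

definition generator :: "real \<Rightarrow> real fps" where
  "generator b = (1 - fps_const b * fps_X) * gen_unit b"

definition generator_inv :: "real \<Rightarrow> real fps" where
  "generator_inv b = geometric_fps b * inverse (gen_unit b)"

lemma generator_mult_inv: "generator b * generator_inv b = 1"
proof -
  have "generator b * generator_inv b =
      ((1 - fps_const b * fps_X) * geometric_fps b) * (gen_unit b * inverse (gen_unit b))"
    by (simp add: generator_def generator_inv_def mult_ac)
  then show ?thesis
    by (simp add: root_factor_mult_geometric_fps inverse_mult_eq_1' gen_unit_0)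
qed

lemma generator_Ints: "generator b $ n \<in> \<int>"
proof (cases n)
  case (Suc m)
  have "generator b $ Suc m = gen_unit b $ Suc m - b * gen_unit b $ m"
    by (simp add: generator_def algebra_simps fps_X_mult_nth)
  then show ?thesis using gen_unit_step_Ints Suc by simp
qed (simp add: generator_def gen_unit_0)

lemma fps_mult_eq_1_Ints:
  fixes F G :: "real fps"
  assumes F: "\<And>n. F $ n \<in> \<int>" "F $ 0 = 1" and FG: "F * G = 1"
  shows "G $ n \<in> \<int>"
proof (induction n rule: less_induct)
  case (less n)
  show ?case
  proof (cases n)
    case 0
    then show ?thesis using arg_cong[OF FG, of "\<lambda>H. H $ 0"] F by simp
  next
    case (Suc m)
    have "0 = (F * G) $ n" using FG Suc by simp
    also have "\<dots> = G $ n + (\<Sum>i=Suc 0..n. F $ i * G $ (n - i))"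
      unfolding fps_mult_nth by (subst sum.atLeast_Suc_atMost) (auto simp: F)
    finally have "G $ n = - (\<Sum>i=Suc 0..n. F $ i * G $ (n - i))" by linarith
    also have "\<dots> \<in> \<int>"
      by (intro Ints_minus Ints_sum Ints_mult F less) (use Suc in auto)
    finally show ?thesis .
  qed
qed

lemma generator_inv_Ints: "generator_inv b $ n \<in> \<int>"
  by (rule fps_mult_eq_1_Ints[OF generator_Ints _ generator_mult_inv])
     (simp add: generator_def gen_unit_0)

lemma fps_norm_summable_generator: "0 \<le> \<rho> \<Longrightarrow> \<rho> < 1 \<Longrightarrow> fps_norm_summable \<rho> (generator b)"
  unfolding generator_def
  by (intro fps_norm_mult(1) fps_norm_summable_root_factor fps_norm_summable_gen_unit)

lemma eval_fps_generator_root: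
  assumes "0 < r'" "r' < 1"
  shows "eval_fps (generator (1 / r')) r' = 0"
  unfolding generator_def using assms
  by (simp add: eval_fps_mult_if_fps_norm_summable fps_norm_summable_root_factor fps_norm_summable_gen_unit
      eval_fps_root_factor)

lemma coeff_mult_geometric_fps_root:
  fixes A :: "real fps"
  assumes r': "0 < r'" and A: "fps_norm_summable r' A" and root: "eval_fps A r' = 0"
  shows "(A * geometric_fps (1 / r')) $ m * r'^m = - (\<Sum>j. A $ (m + Suc j) * r'^(m + Suc j))"
proof -
  have "summable (\<lambda>n. \<bar>A $ n * r'^n\<bar>)" using A r' by (simp add: fps_norm_summable_def abs_mult)
  then have "summable (\<lambda>n. A $ n * r'^n)" by (rule summable_rabs_cancel)
  from suminf_split_initial_segment[OF this, of "Suc m"]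
  have "0 = (\<Sum>j. A $ (j + Suc m) * r'^(j + Suc m)) + (\<Sum>i<Suc m. A $ i * r'^i)"
    using root by (simp add: eval_fps_def)
  moreover have "(A * geometric_fps (1 / r')) $ m * r'^m = (\<Sum>i\<le>m. A $ i * r'^i)"
  proof -
    have "(A * geometric_fps (1 / r')) $ m * r'^m = (\<Sum>i\<le>m. A $ i * ((1 / r')^(m - i) * r'^m))"
      by (simp add: fps_mult_nth geometric_fps_def sum_distrib_right atLeast0AtMost mult.assoc)
    also have "\<dots> = (\<Sum>i\<le>m. A $ i * r'^i)"
    proof (rule sum.cong)
      fix i assume "i \<in> {..m}"
      then have "(1 / r')^(m - i) * r'^m = r'^i"
        using r' by (simp add: power_diff power_one_over)
      then show "A $ i * ((1 / r')^(m - i) * r'^m) = A $ i * r'^i" by simp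
    qed simp
    finally show ?thesis .
  qed
  ultimately show ?thesis by (simp add: lessThan_Suc_atMost add.commute)
qed

lemma abs_coeff_mult_geometric_fps_root_le:
  fixes A :: "real fps"
  assumes r: "0 < r'" "r' < r" and A: "fps_norm_summable r A" and root: "eval_fps A r' = 0"
  shows "\<bar>(A * geometric_fps (1 / r')) $ m\<bar> * r^m \<le>
    (\<Sum>j. (r' / r)^Suc j * (\<bar>A $ (m + Suc j)\<bar> * r^(m + Suc j)))"
proof -
  have A': "fps_norm_summable r' A" by (rule fps_norm_summable_mono[OF A]) (use r in auto)
  have s_abs: "summable (\<lambda>j. \<bar>A $ (m + Suc j) * r'^(m + Suc j)\<bar>)"
    using summable_ignore_initial_segment[OF A'[unfolded fps_norm_summable_def], of "Suc m"] r
    by (simp add: abs_mult add.commute)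
  have "\<bar>(A * geometric_fps (1 / r')) $ m\<bar> * r^m =
      (r / r')^m * \<bar>(A * geometric_fps (1 / r')) $ m * r'^m\<bar>"
    using r by (simp add: abs_mult power_divide)
  also have "\<dots> \<le> (r / r')^m * (\<Sum>j. \<bar>A $ (m + Suc j) * r'^(m + Suc j)\<bar>)"
    unfolding coeff_mult_geometric_fps_root[OF r(1) A' root] abs_minus_cancel
    using r by (intro mult_left_mono summable_rabs s_abs) auto
  also have "\<dots> = (\<Sum>j. (r' / r)^Suc j * (\<bar>A $ (m + Suc j)\<bar> * r^(m + Suc j)))"
    unfolding suminf_mult[OF s_abs, symmetric]
    using r by (intro suminf_cong) (simp add: abs_mult power_divide power_add field_simps)
  finally show ?thesis .
qed

lemma sum_weighted_tails_le:
  fixes p :: "nat \<Rightarrow> real"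
  assumes sp: "summable p" and p: "\<And>i. 0 \<le> p i" and t: "0 < t" "t < 1"
  shows "summable (\<lambda>j. t^Suc j * p (m + Suc j))"
    and "(\<Sum>m<M. \<Sum>j. t^Suc j * p (m + Suc j)) \<le> t / (1 - t) * suminf p"
proof -
  have sp_shift: "summable (\<lambda>m. p (m + k))" for k
    using summable_ignore_initial_segment[OF sp, of k] by simp
  have shift_le: "(\<Sum>m<M. p (m + k)) \<le> suminf p" for M k
  proof -
    have "(\<Sum>m<M. p (m + k)) \<le> (\<Sum>m. p (m + k))"
      by (rule sum_le_suminf[OF sp_shift]) (use p in auto)
    also have "\<dots> \<le> suminf p"
      using suminf_split_initial_segment[OF sp, of k] p by (simp add: sum_nonneg)
    finally show ?thesis .
  qed
  have s_tail: "summable (\<lambda>j. t^Suc j * p (m + Suc j))" for m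
  proof (rule summable_comparison_test'[OF sp_shift[of "Suc m"], of 0])
    fix j :: nat
    have "t^Suc j \<le> 1" using t by (intro power_le_one) auto
    then show "norm (t^Suc j * p (m + Suc j)) \<le> p (j + Suc m)"
      using t p[of "m + Suc j"] by (simp add: mult_left_le_one_le add.commute)
  qed
  then show "summable (\<lambda>j. t^Suc j * p (m + Suc j))" .
  have "(\<Sum>m<M. \<Sum>j. t^Suc j * p (m + Suc j)) = (\<Sum>j. t^Suc j * (\<Sum>m<M. p (m + Suc j)))"
    by (subst suminf_sum[OF s_tail, symmetric]) (simp add: sum_distrib_left)
  also have "\<dots> \<le> (\<Sum>j. t^Suc j * suminf p)"
  proof (rule suminf_le)
    show "summable (\<lambda>j. t^Suc j * (\<Sum>m<M. p (m + Suc j)))"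
      unfolding sum_distrib_left by (intro summable_sum s_tail)
    show "summable (\<lambda>j. t^Suc j * suminf p)"
      using t by (simp add: summable_mult2 summable_geometric)
  next
    show "t^Suc j * (\<Sum>m<M. p (m + Suc j)) \<le> t^Suc j * suminf p" for j
      using t by (intro mult_left_mono shift_le) auto
  qed
  also have "\<dots> = t / (1 - t) * suminf p"
  proof -
    have "(\<lambda>j. t * t^j * suminf p) sums (t * (1 / (1 - t)) * suminf p)"
      using t by (intro sums_mult2 sums_mult geometric_sums) auto
    then show ?thesis by (simp add: sums_iff)
  qed
  finally show "(\<Sum>m<M. \<Sum>j. t^Suc j * p (m + Suc j)) \<le> t / (1 - t) * suminf p" .
qed

lemma fps_norm_mult_geometric_fps_root:
  fixes A :: "real fps"
  assumes r: "0 < r'" "r' < r" and A: "fps_norm_summable r A" and root: "eval_fps A r' = 0"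
  shows "fps_norm_summable r (A * geometric_fps (1 / r'))"
    and "fps_norm r (A * geometric_fps (1 / r')) \<le> r' / (r - r') * fps_norm r A"
proof -
  define t where "t = r' / r"
  define p where "p = (\<lambda>i. \<bar>A $ i\<bar> * r^i)"
  have t: "0 < t" "t < 1" using r by (auto simp: t_def)
  have sp: "summable p" and sum_p: "suminf p = fps_norm r A"
    using A by (simp_all add: p_def fps_norm_summable_def fps_norm_def)
  have p: "0 \<le> p i" for i using r by (simp add: p_def)
  have "t / (1 - t) = r' / (r - r')"
    using r by (simp add: t_def field_simps)
  then have tails: "(\<Sum>m<M. \<Sum>j. t^Suc j * p (m + Suc j)) \<le> r' / (r - r') * fps_norm r A" for M
    using sum_weighted_tails_le(2)[OF sp p t, of M] sum_p by simp
  have partial: "(\<Sum>m<M. \<bar>(A * geometric_fps (1 / r')) $ m\<bar> * r^m) \<le> r' / (r - r') * fps_norm r A" for M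
  proof (rule order_trans[OF sum_mono tails])
    show "\<bar>(A * geometric_fps (1 / r')) $ m\<bar> * r^m \<le> (\<Sum>j. t^Suc j * p (m + Suc j))" for m
      using abs_coeff_mult_geometric_fps_root_le[OF r A root, of m] by (simp add: t_def p_def)
  qed
  show S: "fps_norm_summable r (A * geometric_fps (1 / r'))"
    unfolding fps_norm_summable_def
    by (rule summableI_nonneg_bounded[of _ "r' / (r - r') * fps_norm r A"]) (use partial r in auto)
  show "fps_norm r (A * geometric_fps (1 / r')) \<le> r' / (r - r') * fps_norm r A"
    using suminf_le_const[OF S[unfolded fps_norm_summable_def] partial]
    unfolding fps_norm_def[of r "A * geometric_fps (1 / r')"] .
qed

lemma fps_norm_mult_generator_inv:
  fixes A :: "real fps"
  assumes r: "0 < r'" "r' < r" "r < 1" and A: "fps_norm_summable r A" and root: "eval_fps A r' = 0"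
  shows "fps_norm_summable r (A * generator_inv (1 / r'))"
    and "fps_norm r (A * generator_inv (1 / r')) \<le>
      r' / (r - r') * fps_norm r (inverse (gen_unit (1 / r'))) * fps_norm r A"
proof -
  let ?W = "inverse (gen_unit (1 / r'))"
  have W: "fps_norm_summable r ?W" "0 \<le> fps_norm r ?W"
    using r by (simp_all add: fps_norm_summable_inverse_gen_unit fps_norm_nonneg)
  note quotient = fps_norm_mult_geometric_fps_root[OF r(1,2) A root]
  have eq: "A * generator_inv (1 / r') = (A * geometric_fps (1 / r')) * ?W"
    by (simp add: generator_inv_def mult_ac)
  show "fps_norm_summable r (A * generator_inv (1 / r'))"
    unfolding eq using r by (intro fps_norm_mult(1) quotient(1) W(1)) simp
  have "fps_norm r (A * generator_inv (1 / r')) \<le> fps_norm r (A * geometric_fps (1 / r')) * fps_norm r ?W"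
    unfolding eq using r by (intro fps_norm_mult(2) quotient(1) W(1)) simp
  also have "\<dots> \<le> r' / (r - r') * fps_norm r A * fps_norm r ?W"
    by (rule mult_right_mono[OF quotient(2) W(2)])
  finally show "fps_norm r (A * generator_inv (1 / r')) \<le> r' / (r - r') * fps_norm r ?W * fps_norm r A"
    by (simp add: mult_ac)
qed

section \<open>Laurent series with locally constant coefficients\<close>

lemma summable_on_int_bounded_below_iff:
  fixes y :: "int \<Rightarrow> real"
  assumes "\<And>n. n < K \<Longrightarrow> y n = 0"
  shows "y summable_on UNIV \<longleftrightarrow> summable (\<lambda>p. \<bar>y (K + int p)\<bar>)"
proof -
  have bij: "bij_betw (\<lambda>p::nat. K + int p) UNIV {K..}"
    by (rule bij_betw_byWitness[of _ "\<lambda>n. nat (n - K)"]) auto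
  have "y summable_on UNIV \<longleftrightarrow> y summable_on {K..}"
    by (rule summable_on_cong_neutral) (use assms in auto)
  also have "\<dots> \<longleftrightarrow> (\<lambda>p. y (K + int p)) summable_on UNIV"
    using summable_on_reindex_bij_betw[OF bij, of y] by simp
  also have "\<dots> \<longleftrightarrow> (\<lambda>p. \<bar>y (K + int p)\<bar>) summable_on UNIV"
    using summable_on_iff_abs_summable_on_real[of "\<lambda>p. y (K + int p)" UNIV] by simp
  also have "\<dots> \<longleftrightarrow> summable (\<lambda>p. \<bar>y (K + int p)\<bar>)"
    by (rule summable_on_UNIV_nonneg_real_iff) auto
  finally show ?thesis .
qed

lemma infsum_int_bounded_below:
  fixes y :: "int \<Rightarrow> real"
  assumes "\<And>n. n < K \<Longrightarrow> y n = 0" and "summable (\<lambda>p. \<bar>y (K + int p)\<bar>)"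
  shows "infsum y UNIV = (\<Sum>p. y (K + int p))"
proof -
  have bij: "bij_betw (\<lambda>p::nat. K + int p) UNIV {K..}"
    by (rule bij_betw_byWitness[of _ "\<lambda>n. nat (n - K)"]) auto
  have "infsum y UNIV = infsum y {K..}"
    by (rule infsum_cong_neutral) (use assms in auto)
  also have "\<dots> = infsum (\<lambda>p. y (K + int p)) UNIV"
    using infsum_reindex_bij_betw[OF bij, of y] by simp
  also have "\<dots> = (\<Sum>p. y (K + int p))"
    by (intro infsumI norm_summable_imp_has_sum)
       (use assms(2) in \<open>auto simp: summable_sums summable_rabs_cancel\<close>)
  finally show ?thesis .
qed

text \<open>laurent_fps a K s is the power series T^-K a(s); it loses nothing when a vanishes below K.\<close>
definition laurent_fps :: "(int \<Rightarrow> 'a \<Rightarrow> int) \<Rightarrow> int \<Rightarrow> 'a \<Rightarrow> real fps" where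
  "laurent_fps a K s = Abs_fps (\<lambda>p. real_of_int (a (K + int p) s))"

lemma laurent_fps_nth [simp]: "laurent_fps a K s $ p = real_of_int (a (K + int p) s)"
  by (simp add: laurent_fps_def)

context
  fixes a :: "int \<Rightarrow> 'a \<Rightarrow> int" and K :: int and \<rho> :: real
  assumes \<rho>: "0 < \<rho>" and vanish: "\<forall>n<K. \<forall>s. a n s = 0"
begin

lemma summable_on_laurent_iff:
  "(\<lambda>n. \<bar>real_of_int (a n s)\<bar> * \<rho> powi n) summable_on UNIV \<longleftrightarrow> fps_norm_summable \<rho> (laurent_fps a K s)"
proof -
  have "(\<lambda>n. \<bar>real_of_int (a n s)\<bar> * \<rho> powi n) summable_on UNIV \<longleftrightarrow>
      summable (\<lambda>p. \<rho> powi K * (\<bar>real_of_int (a (K + int p) s)\<bar> * \<rho>^p))"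
    using summable_on_int_bounded_below_iff[of K "\<lambda>n. \<bar>real_of_int (a n s)\<bar> * \<rho> powi n"] vanish \<rho>
    by (simp add: power_int_add abs_mult mult_ac)
  also have "\<dots> \<longleftrightarrow> fps_norm_summable \<rho> (laurent_fps a K s)"
    using \<rho> by (simp add: fps_norm_summable_def)
  finally show ?thesis .
qed

lemma infsum_abs_laurent:
  assumes "fps_norm_summable \<rho> (laurent_fps a K s)"
  shows "(\<Sum>\<^sub>\<infinity>n. \<bar>real_of_int (a n s)\<bar> * \<rho> powi n) = \<rho> powi K * fps_norm \<rho> (laurent_fps a K s)"
proof -
  have S: "summable (\<lambda>p. \<bar>real_of_int (a (K + int p) s)\<bar> * \<rho>^p)"
    using assms by (simp add: fps_norm_summable_def)
  have "(\<Sum>\<^sub>\<infinity>n. \<bar>real_of_int (a n s)\<bar> * \<rho> powi n) = (\<Sum>p. \<rho> powi K * (\<bar>real_of_int (a (K + int p) s)\<bar> * \<rho>^p))"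
    using infsum_int_bounded_below[of K "\<lambda>n. \<bar>real_of_int (a n s)\<bar> * \<rho> powi n"] vanish \<rho> S
    by (simp add: power_int_add abs_mult mult_ac summable_mult)
  also have "\<dots> = \<rho> powi K * fps_norm \<rho> (laurent_fps a K s)"
    using suminf_mult[OF S] by (simp add: fps_norm_def)
  finally show ?thesis .
qed

lemma theta_eq_eval_laurent_fps:
  assumes "fps_norm_summable \<rho> (laurent_fps a K s)"
  shows "theta \<rho> a s = \<rho> powi K * eval_fps (laurent_fps a K s) \<rho>"
proof -
  have S: "summable (\<lambda>p. \<bar>real_of_int (a (K + int p) s) * \<rho>^p\<bar>)"
    using assms \<rho> by (simp add: fps_norm_summable_def abs_mult)
  have "theta \<rho> a s = (\<Sum>p. \<rho> powi K * (real_of_int (a (K + int p) s) * \<rho>^p))"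
    unfolding theta_def
    using infsum_int_bounded_below[of K "\<lambda>n. real_of_int (a n s) * \<rho> powi n"] vanish \<rho> S
    by (simp add: power_int_add abs_mult mult_ac summable_mult)
  also have "\<dots> = \<rho> powi K * eval_fps (laurent_fps a K s) \<rho>"
    using suminf_mult[OF summable_rabs_cancel[OF S]] by (simp add: eval_fps_def)
  finally show ?thesis .
qed

lemma ZT_iff_laurent_fps:
  "a \<in> ZT X \<rho> \<longleftrightarrow>
     (\<forall>n. continuous_map X (discrete_topology UNIV) (a n)) \<and> (\<forall>n s. s \<notin> topspace X \<longrightarrow> a n s = 0) \<and>
     (\<exists>c. \<forall>s\<in>topspace X. fps_norm_summable \<rho> (laurent_fps a K s) \<and> fps_norm \<rho> (laurent_fps a K s) \<le> c)"
proof -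
  let ?S = "\<lambda>s. fps_norm_summable \<rho> (laurent_fps a K s)" and ?N = "\<lambda>s. fps_norm \<rho> (laurent_fps a K s)"
  have K: "0 < \<rho> powi K" using \<rho> by simp
  have "(\<exists>c. \<forall>s\<in>topspace X. (\<lambda>n. \<bar>real_of_int (a n s)\<bar> * \<rho> powi n) summable_on UNIV \<and>
          (\<Sum>\<^sub>\<infinity>n. \<bar>real_of_int (a n s)\<bar> * \<rho> powi n) \<le> c) \<longleftrightarrow>
        (\<exists>c. \<forall>s\<in>topspace X. ?S s \<and> \<rho> powi K * ?N s \<le> c)"
    by (simp add: summable_on_laurent_iff infsum_abs_laurent cong: conj_cong)
  also have "\<dots> \<longleftrightarrow> (\<exists>c. \<forall>s\<in>topspace X. ?S s \<and> ?N s \<le> c)"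
  proof (intro iffI; elim exE)
    fix c assume "\<forall>s\<in>topspace X. ?S s \<and> \<rho> powi K * ?N s \<le> c"
    then show "\<exists>c. \<forall>s\<in>topspace X. ?S s \<and> ?N s \<le> c"
      using K by (intro exI[of _ "c / \<rho> powi K"]) (simp add: field_simps)
  next
    fix c assume "\<forall>s\<in>topspace X. ?S s \<and> ?N s \<le> c"
    then show "\<exists>c. \<forall>s\<in>topspace X. ?S s \<and> \<rho> powi K * ?N s \<le> c"
      using K by (intro exI[of _ "\<rho> powi K * c"]) simp
  qed
  finally show ?thesis
    unfolding ZT_def of_int_abs using vanish by blast
qed

end

lemma ZT_vanishes_below:
  assumes "a \<in> ZT X r"
  obtains K where "\<forall>n<K. \<forall>s. a n s = 0"
  using assms unfolding ZT_def by blast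

context
  fixes a b :: "int \<Rightarrow> 'a \<Rightarrow> int" and Ka Kb :: int
  assumes a: "\<forall>n<Ka. \<forall>s. a n s = 0" and b: "\<forall>n<Kb. \<forall>s. b n s = 0"
begin

lemma ls_mult_eq_sum: "ls_mult a b n s = (\<Sum>i\<in>{Ka..n - Kb}. a i s * b (n - i) s)"
  unfolding ls_mult_def
proof (rule sum.mono_neutral_left)
  show "{i. a i s \<noteq> 0 \<and> b (n - i) s \<noteq> 0} \<subseteq> {Ka..n - Kb}"
  proof
    fix i assume "i \<in> {i. a i s \<noteq> 0 \<and> b (n - i) s \<noteq> 0}"
    then have "\<not> i < Ka" "\<not> n - i < Kb" using a b by auto
    then show "i \<in> {Ka..n - Kb}" by simp
  qed
qed auto

lemma ls_mult_vanishes_below: "\<forall>n<Ka + Kb. \<forall>s. ls_mult a b n s = 0"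
  by (simp add: ls_mult_eq_sum)

lemma laurent_fps_ls_mult: "laurent_fps (ls_mult a b) (Ka + Kb) s = laurent_fps a Ka s * laurent_fps b Kb s"
proof (rule fps_ext)
  fix p
  have "(\<Sum>j=0..p. a (Ka + int j) s * b (Kb + int (p - j)) s) =
      (\<Sum>i\<in>{Ka..Ka + int p}. a i s * b (Ka + Kb + int p - i) s)"
  proof (rule sum.reindex_bij_witness[of _ "\<lambda>i. nat (i - Ka)" "\<lambda>j. Ka + int j"])
    fix j assume j: "j \<in> {0..p}"
    then have "Kb + int (p - j) = Ka + Kb + int p - (Ka + int j)" by (simp add: of_nat_diff)
    then show "a (Ka + int j) s * b (Ka + Kb + int p - (Ka + int j)) s =
        a (Ka + int j) s * b (Kb + int (p - j)) s"
      by simp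
    show "nat (Ka + int j - Ka) = j" "Ka + int j \<in> {Ka..Ka + int p}" using j by auto
  next
    fix i assume i: "i \<in> {Ka..Ka + int p}"
    then show "Ka + int (nat (i - Ka)) = i" by simp
    from i show "nat (i - Ka) \<in> {0..p}" by (simp add: nat_le_iff)
  qed
  also have "\<dots> = ls_mult a b (Ka + Kb + int p) s"
    by (simp add: ls_mult_eq_sum)
  finally have "real_of_int (ls_mult a b (Ka + Kb + int p) s) =
      real_of_int (\<Sum>j=0..p. a (Ka + int j) s * b (Kb + int (p - j)) s)"
    by (simp only:)
  then show "laurent_fps (ls_mult a b) (Ka + Kb) s $ p = (laurent_fps a Ka s * laurent_fps b Kb s) $ p"
    by (simp add: fps_mult_nth)
qed

lemma continuous_map_ls_mult:
  assumes "\<And>n. continuous_map X (discrete_topology UNIV) (a n)"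
    and "\<And>n. continuous_map X (discrete_topology UNIV) (b n)"
  shows "continuous_map X (discrete_topology UNIV) (ls_mult a b n)"
proof -
  have "continuous_map X (discrete_topology UNIV) (\<lambda>s. a i s * b (n - i) s)" for i
    using continuous_map_discrete_binop[OF assms(1) assms(2), of "(*)"] by simp
  then have "continuous_map X (discrete_topology UNIV) (\<lambda>s. \<Sum>i\<in>{Ka..n - Kb}. a i s * b (n - i) s)"
    by (intro continuous_map_discrete_sum) auto
  then show ?thesis by (simp add: ls_mult_eq_sum[abs_def])
qed

end

lemma ZT_ls_mult:
  assumes A: "a \<in> ZT X r" and B: "b \<in> ZT X r" and r: "0 < r"
  shows "ls_mult a b \<in> ZT X r"
proof -
  obtain Ka Kb where Ka: "\<forall>n<Ka. \<forall>s. a n s = 0" and Kb: "\<forall>n<Kb. \<forall>s. b n s = 0"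
    using ZT_vanishes_below A B by metis
  note ZT_a = A[unfolded ZT_iff_laurent_fps[OF r Ka]] and ZT_b = B[unfolded ZT_iff_laurent_fps[OF r Kb]]
  obtain ca cb where
    ca: "\<And>s. s \<in> topspace X \<Longrightarrow> fps_norm_summable r (laurent_fps a Ka s) \<and> fps_norm r (laurent_fps a Ka s) \<le> ca" and
    cb: "\<And>s. s \<in> topspace X \<Longrightarrow> fps_norm_summable r (laurent_fps b Kb s) \<and> fps_norm r (laurent_fps b Kb s) \<le> cb"
    using ZT_a ZT_b by metis
  have bound: "fps_norm_summable r (laurent_fps (ls_mult a b) (Ka + Kb) s) \<and>
      fps_norm r (laurent_fps (ls_mult a b) (Ka + Kb) s) \<le> ca * cb" if s: "s \<in> topspace X" for s
    unfolding laurent_fps_ls_mult[OF Ka Kb] using r ca[OF s] cb[OF s]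
    by (meson fps_norm_mult(1,2) fps_norm_nonneg less_imp_le mult_mono order_trans)
  have outside: "\<forall>n s. s \<notin> topspace X \<longrightarrow> ls_mult a b n s = 0"
    using ZT_a by (simp add: ls_mult_def)
  show ?thesis
    unfolding ZT_iff_laurent_fps[OF r ls_mult_vanishes_below[OF Ka Kb]]
  proof (intro conjI exI[of _ "ca * cb"])
    show "\<forall>n. continuous_map X (discrete_topology UNIV) (ls_mult a b n)"
      using ZT_a ZT_b continuous_map_ls_mult[OF Ka Kb] by blast
  qed (use outside bound in auto)
qed

lemma theta_ls_mult:
  assumes A: "a \<in> ZT X r" and B: "b \<in> ZT X r" and r: "0 < r'" "r' \<le> r" and s: "s \<in> topspace X"
  shows "theta r' (ls_mult a b) s = theta r' a s * theta r' b s"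
proof -
  obtain Ka Kb where Ka: "\<forall>n<Ka. \<forall>s. a n s = 0" and Kb: "\<forall>n<Kb. \<forall>s. b n s = 0"
    using ZT_vanishes_below A B by metis
  have "fps_norm_summable r (laurent_fps a Ka s)" "fps_norm_summable r (laurent_fps b Kb s)"
    using A B s r by (auto simp: ZT_iff_laurent_fps[OF _ Ka] ZT_iff_laurent_fps[OF _ Kb])
  then have sa: "fps_norm_summable r' (laurent_fps a Ka s)" and sb: "fps_norm_summable r' (laurent_fps b Kb s)"
    using r by (auto intro: fps_norm_summable_mono)
  have sab: "fps_norm_summable r' (laurent_fps (ls_mult a b) (Ka + Kb) s)"
    unfolding laurent_fps_ls_mult[OF Ka Kb] using r sa sb by (simp add: fps_norm_mult(1))
  have "theta r' (ls_mult a b) s = r' powi (Ka + Kb) * eval_fps (laurent_fps (ls_mult a b) (Ka + Kb) s) r'"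
    by (rule theta_eq_eval_laurent_fps[OF r(1) ls_mult_vanishes_below[OF Ka Kb] sab])
  also have "\<dots> = (r' powi Ka * eval_fps (laurent_fps a Ka s) r') * (r' powi Kb * eval_fps (laurent_fps b Kb s) r')"
    unfolding laurent_fps_ls_mult[OF Ka Kb] using r sa sb
    by (simp add: eval_fps_mult_if_fps_norm_summable power_int_add mult_ac)
  also have "\<dots> = theta r' a s * theta r' b s"
    by (simp add: theta_eq_eval_laurent_fps[OF r(1) Ka sa] theta_eq_eval_laurent_fps[OF r(1) Kb sb])
  finally show ?thesis .
qed

text \<open>The constant Laurent series F on X; the floor only converts types, as F is meant to have
  integer coefficients.\<close>
definition const_laurent :: "'a topology \<Rightarrow> real fps \<Rightarrow> int \<Rightarrow> 'a \<Rightarrow> int" where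
  "const_laurent X F n s = (if s \<in> topspace X \<and> 0 \<le> n then \<lfloor>F $ nat n\<rfloor> else 0)"

lemma const_laurent_vanishes_below: "\<forall>n<0. \<forall>s. const_laurent X F n s = 0"
  by (simp add: const_laurent_def)

lemma laurent_fps_const_laurent:
  assumes "\<And>n. F $ n \<in> \<int>" "s \<in> topspace X"
  shows "laurent_fps (const_laurent X F) 0 s = F"
  by (rule fps_ext) (use assms in \<open>auto simp: const_laurent_def elim: Ints_cases\<close>)

lemma continuous_map_const_laurent: "continuous_map X (discrete_topology UNIV) (const_laurent X F n)"
  by (rule continuous_map_eq[of _ _ "\<lambda>_. \<lfloor>F $ nat n\<rfloor> * (if 0 \<le> n then 1 else 0)"])
     (auto simp: const_laurent_def)

lemma ZT_const_laurent:
  assumes r: "0 < r" and F: "\<And>n. F $ n \<in> \<int>" "fps_norm_summable r F"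
  shows "const_laurent X F \<in> ZT X r"
  unfolding ZT_iff_laurent_fps[OF r const_laurent_vanishes_below]
  by (intro conjI allI impI exI[of _ "fps_norm r F"] ballI)
     (auto simp: const_laurent_def laurent_fps_const_laurent F continuous_map_const_laurent)

section \<open>Surjectivity of theta and its kernel\<close>

lemma theta_surjective:
  assumes ed: "extremally_disconnected X" and f: "continuous_map X euclideanreal f"
    and r: "0 < r'" "r' < r" "r < 1"
  shows "\<exists>a\<in>ZT X r. \<forall>s\<in>topspace X. theta r' a s = f s"
proof -
  obtain d :: "nat \<Rightarrow> 'a \<Rightarrow> int" and D where
    d_cont: "\<And>n. continuous_map X (discrete_topology UNIV) (d n)" and
    d_bound: "\<And>n s. s \<in> topspace X \<Longrightarrow> \<bar>real_of_int (d n s)\<bar> \<le> D" and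
    d_sums: "\<And>s. s \<in> topspace X \<Longrightarrow> (\<lambda>n. real_of_int (d n s) * r'^n) sums f s"
    using extremally_disconnected_digit_expansion[OF ed f, of r'] r by auto
  define a where "a n s = (if s \<in> topspace X \<and> 0 \<le> n then d (nat n) s else 0)" for n s
  have vanish: "\<forall>n<0. \<forall>s. a n s = 0" by (simp add: a_def)
  have laurent_a: "laurent_fps a 0 s = Abs_fps (\<lambda>n. real_of_int (d n s))" if "s \<in> topspace X" for s
    using that by (intro fps_ext) (simp add: a_def)
  have summable: "fps_norm_summable \<rho> (laurent_fps a 0 s) \<and> fps_norm \<rho> (laurent_fps a 0 s) \<le> D / (1 - \<rho>)"
    if s: "s \<in> topspace X" and \<rho>: "0 \<le> \<rho>" "\<rho> < 1" for s \<rho>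
    using fps_norm_bounded_coeffs[of "laurent_fps a 0 s" D \<rho>] d_bound[OF s] \<rho> by (simp add: laurent_a[OF s])
  have r0: "0 < r" using r by simp
  have "a \<in> ZT X r"
    unfolding ZT_iff_laurent_fps[OF r0 vanish]
  proof (intro conjI allI impI exI[of _ "D / (1 - r)"] ballI)
    show "continuous_map X (discrete_topology UNIV) (a n)" for n
      by (rule continuous_map_eq[of _ _ "if 0 \<le> n then d (nat n) else (\<lambda>_. 0)"])
         (auto simp: a_def d_cont)
  qed (use r in \<open>auto simp: a_def summable\<close>)
  moreover have "theta r' a s = f s" if s: "s \<in> topspace X" for s
  proof -
    have "theta r' a s = eval_fps (laurent_fps a 0 s) r'"
      using theta_eq_eval_laurent_fps[OF _ vanish, of r'] summable[OF s, of r'] r by simp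
    then show ?thesis using d_sums[OF s] by (simp add: laurent_a[OF s] eval_fps_def sums_iff)
  qed
  ultimately show ?thesis by blast
qed

lemma ls_mult_generator_cancel:
  assumes vanish: "\<forall>n<K. \<forall>s. a n s = 0" and outside: "\<forall>n s. s \<notin> topspace X \<longrightarrow> a n s = 0"
  shows "ls_mult (const_laurent X (generator c)) (ls_mult a (const_laurent X (generator_inv c))) = a"
proof (intro ext)
  fix n s
  let ?g = "const_laurent X (generator c)" and ?h = "const_laurent X (generator_inv c)"
  have vanish_ah: "\<forall>n<K + 0. \<forall>s. ls_mult a ?h n s = 0"
    by (rule ls_mult_vanishes_below[OF vanish const_laurent_vanishes_below])
  show "ls_mult ?g (ls_mult a ?h) n s = a n s"
  proof (cases "s \<in> topspace X \<and> K \<le> n")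
    case True
    have "laurent_fps (ls_mult ?g (ls_mult a ?h)) (0 + (K + 0)) s =
        generator c * (laurent_fps a K s * generator_inv c)"
      unfolding laurent_fps_ls_mult[OF const_laurent_vanishes_below vanish_ah]
        laurent_fps_ls_mult[OF vanish const_laurent_vanishes_below]
      using True by (simp add: laurent_fps_const_laurent generator_Ints generator_inv_Ints)
    also have "\<dots> = laurent_fps a K s"
      by (simp add: generator_mult_inv flip: mult.assoc mult.commute[of "generator c"])
    finally have "laurent_fps (ls_mult ?g (ls_mult a ?h)) K s $ nat (n - K) =
        laurent_fps a K s $ nat (n - K)"
      by simp
    then show ?thesis using True by simp
  next
    case False
    then consider "s \<notin> topspace X" | "n < K" by linarith
    then show ?thesis
    proof cases
      case 1
      then show ?thesis using outside by (simp add: ls_mult_def const_laurent_def)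
    next
      case 2
      then show ?thesis
        using vanish ls_mult_vanishes_below[OF const_laurent_vanishes_below vanish_ah] by simp
    qed
  qed
qed

lemma ZT_ls_mult_generator_inv:
  assumes A: "a \<in> ZT X r" and root: "\<forall>s\<in>topspace X. theta r' a s = 0"
    and r: "0 < r'" "r' < r" "r < 1"
  shows "ls_mult a (const_laurent X (generator_inv (1 / r'))) \<in> ZT X r"
proof -
  let ?h = "const_laurent X (generator_inv (1 / r'))"
  define M where "M = r' / (r - r') * fps_norm r (inverse (gen_unit (1 / r')))"
  have r0: "0 < r" using r by simp
  have M: "0 \<le> M"
    using r by (simp add: M_def fps_norm_nonneg fps_norm_summable_inverse_gen_unit)
  obtain K where vanish: "\<forall>n<K. \<forall>s. a n s = 0" using ZT_vanishes_below A by blast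
  note ZT_a = A[unfolded ZT_iff_laurent_fps[OF r0 vanish]]
  then obtain c where c: "\<And>s. s \<in> topspace X \<Longrightarrow>
      fps_norm_summable r (laurent_fps a K s) \<and> fps_norm r (laurent_fps a K s) \<le> c"
    by metis
  have bound: "fps_norm_summable r (laurent_fps (ls_mult a ?h) (K + 0) s) \<and>
      fps_norm r (laurent_fps (ls_mult a ?h) (K + 0) s) \<le> M * c"
    if s: "s \<in> topspace X" for s
  proof -
    let ?A = "laurent_fps a K s"
    have "fps_norm_summable r' ?A" using c[OF s] r by (auto intro: fps_norm_summable_mono)
    then have "theta r' a s = r' powi K * eval_fps ?A r'"
      by (rule theta_eq_eval_laurent_fps[OF r(1) vanish])
    then have "eval_fps ?A r' = 0" using root s r by simp
    note quotient = fps_norm_mult_generator_inv[OF r conjunct1[OF c[OF s]] this, folded M_def]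
    have eq: "laurent_fps (ls_mult a ?h) (K + 0) s = ?A * generator_inv (1 / r')"
      unfolding laurent_fps_ls_mult[OF vanish const_laurent_vanishes_below]
      using s by (simp add: laurent_fps_const_laurent generator_inv_Ints)
    have "fps_norm r (laurent_fps (ls_mult a ?h) (K + 0) s) \<le> M * c"
      unfolding eq using quotient(2) mult_left_mono[OF conjunct2[OF c[OF s]] M] by linarith
    then show ?thesis unfolding eq using quotient(1) by simp
  qed
  have outside: "\<forall>n s. s \<notin> topspace X \<longrightarrow> ls_mult a ?h n s = 0"
    using ZT_a by (simp add: ls_mult_def)
  show ?thesis
    unfolding ZT_iff_laurent_fps[OF r0 ls_mult_vanishes_below[OF vanish const_laurent_vanishes_below]]
  proof (intro conjI exI[of _ "M * c"])
    show "\<forall>n. continuous_map X (discrete_topology UNIV) (ls_mult a ?h n)"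
      using ZT_a continuous_map_ls_mult[OF vanish const_laurent_vanishes_below] continuous_map_const_laurent
      by blast
  qed (use outside bound in auto)
qed

lemma ZT_generator:
  assumes "0 < r" "r < 1"
  shows "const_laurent X (generator b) \<in> ZT X r"
  using assms by (intro ZT_const_laurent generator_Ints fps_norm_summable_generator) auto

lemma theta_ls_mult_generator:
  assumes B: "b \<in> ZT X r" and r: "0 < r'" "r' < r" "r < 1" and s: "s \<in> topspace X"
  shows "theta r' (ls_mult (const_laurent X (generator (1 / r'))) b) s = 0"
proof -
  have L: "laurent_fps (const_laurent X (generator (1 / r'))) 0 s = generator (1 / r')"
    using s by (simp add: laurent_fps_const_laurent generator_Ints)
  have "theta r' (const_laurent X (generator (1 / r'))) s =
      r' powi 0 * eval_fps (laurent_fps (const_laurent X (generator (1 / r'))) 0 s) r'"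
    by (rule theta_eq_eval_laurent_fps[OF r(1) const_laurent_vanishes_below])
       (use r in \<open>simp add: L fps_norm_summable_generator\<close>)
  then have "theta r' (const_laurent X (generator (1 / r'))) s = 0"
    using eval_fps_generator_root r by (simp add: L)
  then show ?thesis
    using theta_ls_mult[OF ZT_generator B r(1) _ s] r by simp
qed

lemma generator_not_zero_divisor:
  assumes B: "b \<in> ZT X r" and r: "0 < r" and zero: "ls_mult (const_laurent X (generator c)) b = (\<lambda>n s. 0)"
  shows "b = (\<lambda>n s. 0)"
proof (intro ext)
  fix n s
  obtain K where vanish: "\<forall>n<K. \<forall>s. b n s = 0" using ZT_vanishes_below B by blast
  show "b n s = 0"
  proof (cases "s \<in> topspace X \<and> K \<le> n")
    case True
    have "generator c * laurent_fps b K s = laurent_fps (ls_mult (const_laurent X (generator c)) b) (0 + K) s"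
      unfolding laurent_fps_ls_mult[OF const_laurent_vanishes_below vanish]
      using True by (simp add: laurent_fps_const_laurent generator_Ints)
    also have "\<dots> = 0" by (rule fps_ext) (simp add: zero)
    finally have "generator_inv c * (generator c * laurent_fps b K s) = 0" by simp
    then have "laurent_fps b K s = 0"
      by (simp add: generator_mult_inv flip: mult.assoc mult.commute[of "generator c"])
    then have "laurent_fps b K s $ nat (n - K) = 0" by simp
    then show ?thesis using True by simp
  next
    case False
    then show ?thesis using B vanish unfolding ZT_def by auto
  qed
qed

lemma theta_kernel_eq_generator_ideal:
  assumes r: "0 < r'" "r' < r" "r < 1"
  shows "{a\<in>ZT X r. \<forall>s\<in>topspace X. theta r' a s = 0} =
    {ls_mult (const_laurent X (generator (1 / r'))) b | b. b \<in> ZT X r}"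
proof (intro equalityI subsetI)
  fix a assume "a \<in> {a\<in>ZT X r. \<forall>s\<in>topspace X. theta r' a s = 0}"
  then have a: "a \<in> ZT X r" "\<forall>s\<in>topspace X. theta r' a s = 0" by auto
  obtain K where "\<forall>n<K. \<forall>s. a n s = 0" using ZT_vanishes_below a(1) by blast
  moreover have "\<forall>n s. s \<notin> topspace X \<longrightarrow> a n s = 0" using a(1) unfolding ZT_def by blast
  ultimately have "a = ls_mult (const_laurent X (generator (1 / r')))
      (ls_mult a (const_laurent X (generator_inv (1 / r'))))"
    by (simp add: ls_mult_generator_cancel)
  then show "a \<in> {ls_mult (const_laurent X (generator (1 / r'))) b | b. b \<in> ZT X r}"
    using ZT_ls_mult_generator_inv[OF a r] by blast
next
  fix a assume "a \<in> {ls_mult (const_laurent X (generator (1 / r'))) b | b. b \<in> ZT X r}"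
  then obtain b where b: "b \<in> ZT X r" "a = ls_mult (const_laurent X (generator (1 / r'))) b" by blast
  have "0 < r" using r by simp
  then have "a \<in> ZT X r" using ZT_ls_mult[OF ZT_generator b(1)] r b(2) by simp
  moreover have "\<forall>s\<in>topspace X. theta r' a s = 0" using theta_ls_mult_generator[OF b(1) r] b(2) by simp
  ultimately show "a \<in> {a\<in>ZT X r. \<forall>s\<in>topspace X. theta r' a s = 0}" by simp
qed

theorem mainTheorem10:
  fixes r r' :: real and X :: "'a topology"
  assumes "0 < r'" and "r' < r" and "r < 1"
    and "extremally_disconnected X"
  shows "(\<forall>f. continuous_map X euclideanreal f \<longrightarrow>
            (\<exists>a\<in>ZT X r. \<forall>s\<in>topspace X. theta r' a s = f s))
       \<and> (\<exists>g\<in>ZT X r.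
            (\<forall>b\<in>ZT X r. ls_mult g b = (\<lambda>n s. 0) \<longrightarrow> b = (\<lambda>n s. 0)) \<and>
            {a\<in>ZT X r. \<forall>s\<in>topspace X. theta r' a s = 0} = {ls_mult g b | b. b \<in> ZT X r})"
proof -
  have r: "0 < r" "r < 1" using assms by auto
  let ?g = "const_laurent X (generator (1 / r'))"
  have "?g \<in> ZT X r" by (rule ZT_generator[OF r])
  moreover have "\<forall>b\<in>ZT X r. ls_mult ?g b = (\<lambda>n s. 0) \<longrightarrow> b = (\<lambda>n s. 0)"
    using generator_not_zero_divisor r by blast
  moreover have "\<forall>f. continuous_map X euclideanreal f \<longrightarrow> (\<exists>a\<in>ZT X r. \<forall>s\<in>topspace X. theta r' a s = f s)"
    using theta_surjective[OF assms(4) _ assms(1-3)] by blast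
  ultimately show ?thesis
    using theta_kernel_eq_generator_ideal[OF assms(1-3)] by blast
qed

end
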